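(* Let $\Lambda$ be a block of bounded weights and $\Delta$ the block containing $\mathrm{cl}(\Lambda)$. If $\lambda\in\Delta\setminus\mathrm{cl}(\Lambda)$ and $\mu\ge\lambda$ in the Bruhat order, then $\mu\in\Delta\setminus\mathrm{cl}(\Lambda)$.
   Context: A number line carries vertices indexed by a finite set of consecutive integers here. A (bounded) weight labels each vertex by $\circ,\times,\vee,\wedge$. Bruhat order: generated by declaring that interchanging a $\vee$ with an $\wedge$ to its right makes a weight bigger. A block is an equivalence class of weights under permuting $\vee$'s and $\wedge$'s. For a block $\Lambda$ of bounded weights, each having $p$ labels $\wedge$ and $q$ labels $\vee$, the closure $\mathrm{cl}(\lambda)$ of $\lambda\in\Lambda$ is the weight obtained by adding $p$ new vertices labelled $\vee$ at the left end of the number line and $q$ new vertices labelled $\wedge$ at the right end; $\mathrm{cl}(\Lambda)=\{\mathrm{cl}(\lambda)\mid\lambda\in\Lambda\}$. *)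

theory Defs
  imports "HOL-Combinatorics.Permutations"
begin

text \<open>Labels: Circ = \<circ>, Cross = \<times>, Vee = \<or>, Wedge = \<and>.
  A bounded weight on a number line of consecutive integer vertices is the
  list of its labels read from left to right.\<close>

datatype label = Circ | Cross | Vee | Wedge

type_synonym weight = "label list"

definition same_block :: "weight \<Rightarrow> weight \<Rightarrow> bool" where
  "same_block l m \<longleftrightarrow>
     (\<exists>\<sigma>. \<sigma> permutes {..<length l} \<and>
          (\<forall>i. \<sigma> i \<noteq> i \<longrightarrow> l ! i \<in> {Vee, Wedge}) \<and>
          m = map (\<lambda>i. l ! (\<sigma> i)) [0..<length l])"

definition block_of :: "weight \<Rightarrow> weight set" where
  "block_of l = {m. same_block l m}"

definition is_block :: "weight set \<Rightarrow> bool" where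
  "is_block B \<longleftrightarrow> (\<exists>l. B = block_of l)"

definition bruhat_step :: "weight \<Rightarrow> weight \<Rightarrow> bool" where
  "bruhat_step l m \<longleftrightarrow>
     (\<exists>i j. i < j \<and> j < length l \<and> l ! i = Vee \<and> l ! j = Wedge \<and>
            m = l[i := Wedge, j := Vee])"

definition bruhat_le :: "weight \<Rightarrow> weight \<Rightarrow> bool" where
  "bruhat_le = bruhat_step\<^sup>*\<^sup>*"

definition cl :: "weight \<Rightarrow> weight" where
  "cl l = replicate (count_list l Wedge) Vee @ l @ replicate (count_list l Vee) Wedge"

end

theory Submission
  imports Defs
begin

text \<open>Bruhat steps permute \<or>'s and \<and>'s, so weights above \<open>l\<close> stay in \<open>\<Delta>\<close>. A closure
  \<open>cl y\<close> is \<open>y\<close> flanked by \<or>'s on the left and \<and>'s on the right, and a Bruhat step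
  ending in a weight leaves an \<and> to the left of a \<or> there, so it cannot touch the
  flanks: every weight below \<open>cl y\<close> is some \<open>y'\<close> below \<open>y\<close> flanked in the same way.
  As \<open>y'\<close> lies in the block of \<open>y\<close>, it has as many \<or>'s and \<and>'s as \<open>y\<close>, so the
  flanked weight is \<open>cl y'\<close> with \<open>y' \<in> \<Lambda>\<close>.\<close>

lemma same_block_permute_list:
  "same_block l m \<longleftrightarrow>
     (\<exists>\<sigma>. \<sigma> permutes {..<length l} \<and> (\<forall>i. \<sigma> i \<noteq> i \<longrightarrow> l ! i \<in> {Vee, Wedge}) \<and>
          m = permute_list \<sigma> l)"
  by (simp add: same_block_def permute_list_def)

lemma same_block_refl: "same_block l l"
  unfolding same_block_permute_list by (intro exI[of _ id]) (simp add: permutes_id)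

lemma same_block_trans:
  assumes "same_block l m" and "same_block m k"
  shows "same_block l k"
proof -
  obtain \<sigma> where \<sigma>: "\<sigma> permutes {..<length l}" "\<forall>i. \<sigma> i \<noteq> i \<longrightarrow> l ! i \<in> {Vee, Wedge}"
    "m = permute_list \<sigma> l"
    using assms(1) unfolding same_block_permute_list by blast
  obtain \<tau> where \<tau>: "\<tau> permutes {..<length l}" "\<forall>i. \<tau> i \<noteq> i \<longrightarrow> m ! i \<in> {Vee, Wedge}"
    "k = permute_list \<tau> m"
    using assms(2) unfolding same_block_permute_list \<sigma>(3) by auto
  have "l ! i \<in> {Vee, Wedge}" if "(\<sigma> \<circ> \<tau>) i \<noteq> i" for i
  proof (cases "\<sigma> i = i")
    case True
    with that have "\<tau> i \<noteq> i" by auto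
    then have "i < length l" using \<tau>(1) permutes_not_in by fastforce
    then have "m ! i = l ! i" using \<sigma> True by (simp add: permute_list_nth)
    with \<tau>(2) \<open>\<tau> i \<noteq> i\<close> show ?thesis by auto
  qed (use \<sigma>(2) in blast)
  moreover have "k = permute_list (\<sigma> \<circ> \<tau>) l"
    using \<tau> \<sigma>(3) by (simp add: permute_list_compose)
  ultimately show ?thesis
    unfolding same_block_permute_list using permutes_compose[OF \<tau>(1) \<sigma>(1)] by blast
qed

lemma same_block_sym:
  assumes "same_block l m"
  shows "same_block m l"
proof -
  obtain \<sigma> where \<sigma>: "\<sigma> permutes {..<length l}" "\<forall>i. \<sigma> i \<noteq> i \<longrightarrow> l ! i \<in> {Vee, Wedge}"
    "m = permute_list \<sigma> l"
    using assms unfolding same_block_permute_list by blast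
  have "m ! i \<in> {Vee, Wedge}" if "inv \<sigma> i \<noteq> i" for i
  proof -
    have "\<sigma> i \<noteq> i" using that \<sigma>(1) by (metis permutes_inverses(2))
    then have "i < length l" using \<sigma>(1) permutes_not_in by fastforce
    moreover have "\<sigma> (\<sigma> i) \<noteq> \<sigma> i"
      using \<open>\<sigma> i \<noteq> i\<close> \<sigma>(1) by (metis permutes_inverses(2))
    ultimately show ?thesis using \<sigma> by (simp add: permute_list_nth)
  qed
  moreover have "l = permute_list (inv \<sigma>) m"
    using \<sigma> by (simp add: permute_list_compose[symmetric] permutes_inv permutes_inv_o)
  ultimately show ?thesis
    unfolding same_block_permute_list using \<sigma> permutes_inv by fastforce
qed

lemma same_block_mset:
  assumes "same_block l m"
  shows "mset m = mset l"
  using assms unfolding same_block_permute_list by auto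

lemma same_block_swap:
  assumes "i < length l" "j < length l" "l ! i \<in> {Vee, Wedge}" "l ! j \<in> {Vee, Wedge}"
  shows "same_block l (l[i := l ! j, j := l ! i])"
  unfolding same_block_permute_list
proof (intro exI conjI)
  show "transpose i j permutes {..<length l}"
    using assms by (auto intro: permutes_swap_id)
  show "\<forall>k. transpose i j k \<noteq> k \<longrightarrow> l ! k \<in> {Vee, Wedge}"
    using assms by (auto simp: transpose_def)
  show "l[i := l ! j, j := l ! i] = permute_list (transpose i j) l"
    using assms by (auto intro!: nth_equalityI simp: permute_list_def transpose_def nth_list_update)
qed

lemma bruhat_step_same_block:
  assumes "bruhat_step l m"
  shows "same_block l m"
proof -
  obtain i j where "i < j" "j < length l" "l ! i = Vee" "l ! j = Wedge" "m = l[i := Wedge, j := Vee]"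
    using assms unfolding bruhat_step_def by blast
  then show ?thesis using same_block_swap[of i l j] by simp
qed

lemma bruhat_le_same_block:
  assumes "bruhat_le l m"
  shows "same_block l m"
  using assms unfolding bruhat_le_def
  by induction (auto intro: same_block_refl same_block_trans bruhat_step_same_block)

lemma bruhat_step_into_flanked:
  assumes "bruhat_step a (replicate p Vee @ y @ replicate q Wedge)"
  shows "\<exists>z. a = replicate p Vee @ z @ replicate q Wedge \<and> bruhat_step z y"
proof -
  let ?c = "replicate p Vee @ y @ replicate q Wedge"
  obtain i j where ij: "i < j" "j < length a" "a ! i = Vee" "a ! j = Wedge"
    and c: "?c = a[i := Wedge, j := Vee]"
    using assms unfolding bruhat_step_def by blast
  have c_ij: "?c ! i = Wedge" "?c ! j = Vee"
    using ij by (simp_all add: c nth_list_update)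
  have "p \<le> i"
    using c_ij(1) by (rule contrapos_pp) (simp add: nth_append)
  moreover have "j < p + length y"
  proof (rule ccontr)
    assume "\<not> j < p + length y"
    moreover have "j < p + length y + q"
      using ij(2) arg_cong[OF c, of length] by simp
    ultimately have "\<not> j - p < length y" "j - p - length y < q"
      using \<open>p \<le> i\<close> ij(1) by linarith+
    then show False using c_ij(2) \<open>p \<le> i\<close> ij(1) by (simp add: nth_append)
  qed
  ultimately obtain u v where uv: "i = p + u" "j = p + v" "u < v" "v < length y"
    using ij(1) by (intro that[of "i - p" "j - p"]) auto
  have y_uv: "y ! u = Wedge" "y ! v = Vee"
    using c_ij uv by (simp_all add: nth_append)
  define z where "z = y[u := Vee, v := Wedge]"
  have "a = ?c[i := Vee, j := Wedge]"
    using ij by (auto intro!: nth_equalityI simp: c nth_list_update)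
  then have "a = replicate p Vee @ z @ replicate q Wedge"
    using uv by (simp add: z_def list_update_append)
  moreover have "bruhat_step z y"
    unfolding bruhat_step_def
  proof (intro exI conjI)
    show "y = z[u := Wedge, v := Vee]"
      using uv y_uv by (auto intro!: nth_equalityI simp: z_def nth_list_update)
  qed (use uv in \<open>simp_all add: z_def nth_list_update\<close>)
  ultimately show ?thesis by blast
qed

lemma bruhat_le_into_flanked:
  assumes "bruhat_le a (replicate p Vee @ y @ replicate q Wedge)"
  shows "\<exists>z. a = replicate p Vee @ z @ replicate q Wedge \<and> bruhat_le z y"
  using assms unfolding bruhat_le_def
proof (induction rule: converse_rtranclp_induct)
  case (step a c)
  then obtain z where "c = replicate p Vee @ z @ replicate q Wedge" "bruhat_step\<^sup>*\<^sup>* z y"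
    by blast
  with step.hyps(1) show ?case
    by (metis bruhat_step_into_flanked converse_rtranclp_into_rtranclp)
qed blast

lemma bruhat_le_cl:
  assumes "bruhat_le l (cl y)"
  shows "\<exists>z. l = cl z \<and> bruhat_le z y"
proof -
  obtain z where z: "l = replicate (count_list y Wedge) Vee @ z @ replicate (count_list y Vee) Wedge"
    "bruhat_le z y"
    using bruhat_le_into_flanked assms unfolding cl_def by blast
  have "count_list z x = count_list y x" for x
    using same_block_mset[OF bruhat_le_same_block[OF z(2)]] by (metis count_mset)
  then have "l = cl z"
    using z(1) by (simp add: cl_def)
  with z(2) show ?thesis by blast
qed

lemma block_of_closed:
  assumes "l \<in> block_of x" and "same_block l m"
  shows "m \<in> block_of x"
  using assms same_block_trans unfolding block_of_def by blast

theorem lemma4p1: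
  fixes \<Lambda> \<Delta> :: "weight set" and l m :: weight
  assumes "is_block \<Lambda>"
    and "is_block \<Delta>"
    and "cl ` \<Lambda> \<subseteq> \<Delta>"
    and "l \<in> \<Delta> - cl ` \<Lambda>"
    and "bruhat_le l m"
  shows "m \<in> \<Delta> - cl ` \<Lambda>"
proof
  obtain d where "\<Delta> = block_of d" using assms(2) is_block_def by blast
  then show "m \<in> \<Delta>"
    using assms(4,5) block_of_closed bruhat_le_same_block by blast
  show "m \<notin> cl ` \<Lambda>"
  proof
    assume "m \<in> cl ` \<Lambda>"
    then obtain y where y: "y \<in> \<Lambda>" "m = cl y" by blast
    then obtain z where z: "l = cl z" "bruhat_le z y"
      using bruhat_le_cl assms(5) by blast
    obtain x where "\<Lambda> = block_of x" using assms(1) is_block_def by blast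
    then have "z \<in> \<Lambda>"
      using y(1) z(2) block_of_closed bruhat_le_same_block same_block_sym by blast
    with z(1) assms(4) show False by blast
  qed
qed

end
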